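(* Let $M$ be a finite abelian group of order $m$, $J$ a Jacobi function on $M$, and $i\colon\hat{M}\to\hat{M}$ a bijection with $i(x)=x\,i(x^{-1})$ for all $x$, such that $J(\alpha,\beta)=\frac{1}{m}\sum_{x\in\hat{M}}\alpha(i(x))\beta(i(x)x^{-1})$ for all $\alpha,\beta\in M$. Define $x\oplus y=x\,i(x/y)^{-1}$ for $x,y\in\hat{M}$. Then $\oplus$ is associative.
   Context: $\hat{M}$ is the Pontryagin dual of $M$, written multiplicatively; for $\alpha\in M$, $x\in\hat{M}$, $\alpha(x)$ is the value of the character $x$ at $\alpha$. $\delta(\alpha)=1$ if $\alpha$ is the identity of $M$ and $0$ otherwise. A Jacobi function on $M$ is a function $J\colon M\times M\to\mathbf{C}$ satisfying: (A) $J(\alpha,\beta)=J(\beta,\alpha)$; (B) with $J^*(\alpha,\beta)=-\delta(\alpha)-\delta(\beta)+J(\alpha,\beta)$, $J^*(\alpha,\beta)J^*(\alpha\beta,\gamma)=J^*(\alpha,\beta\gamma)J^*(\beta,\gamma)$; (C) $\sum_{\beta\in M}J(\alpha_1\beta,\alpha_2\beta^{-1})J(\alpha_3\beta,\alpha_4\beta^{-1})=J(\alpha_1\alpha_4,\alpha_2\alpha_3)$; all for all elements of $M$. *)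

theory Defs
  imports Complex_Main
begin

text \<open>The finite abelian group M is a type of class ab_group_add (written additively,
  so the identity is 0 and the group law is +).\<close>

definition dual :: "('a::ab_group_add \<Rightarrow> complex) set" where
  "dual = {\<chi>. \<chi> 0 = 1 \<and> (\<forall>a b. \<chi> (a + b) = \<chi> a * \<chi> b)}"

definition char_mult :: "('a \<Rightarrow> complex) \<Rightarrow> ('a \<Rightarrow> complex) \<Rightarrow> ('a \<Rightarrow> complex)" where
  "char_mult x y = (\<lambda>a. x a * y a)"

definition char_inv :: "('a \<Rightarrow> complex) \<Rightarrow> ('a \<Rightarrow> complex)" where
  "char_inv x = (\<lambda>a. inverse (x a))"

definition char_div :: "('a \<Rightarrow> complex) \<Rightarrow> ('a \<Rightarrow> complex) \<Rightarrow> ('a \<Rightarrow> complex)" where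
  "char_div x y = (\<lambda>a. x a / y a)"

definition kdelta :: "'a::zero \<Rightarrow> complex" where
  "kdelta a = (if a = 0 then 1 else 0)"

definition Jstar :: "('a::zero \<Rightarrow> 'a \<Rightarrow> complex) \<Rightarrow> 'a \<Rightarrow> 'a \<Rightarrow> complex" where
  "Jstar J a b = - kdelta a - kdelta b + J a b"

definition jacobi_function :: "('a::{ab_group_add,finite} \<Rightarrow> 'a \<Rightarrow> complex) \<Rightarrow> bool" where
  "jacobi_function J \<longleftrightarrow>
     (\<forall>a b. J a b = J b a) \<and>
     (\<forall>a b c. Jstar J a b * Jstar J (a + b) c = Jstar J a (b + c) * Jstar J b c) \<and>
     (\<forall>a1 a2 a3 a4. (\<Sum>b\<in>UNIV. J (a1 + b) (a2 - b) * J (a3 + b) (a4 - b)) = J (a1 + a4) (a2 + a3))"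

definition oplus_char :: "(('a \<Rightarrow> complex) \<Rightarrow> ('a \<Rightarrow> complex)) \<Rightarrow> ('a \<Rightarrow> complex) \<Rightarrow> ('a \<Rightarrow> complex) \<Rightarrow> ('a \<Rightarrow> complex)" where
  "oplus_char i x y = char_mult x (char_inv (i (char_div x y)))"

end

theory Submission
  imports Defs "HOL-Library.FuncSet" "HOL-Library.Cardinality"
begin

text \<open>Put \<open>P \<alpha> \<beta> = m J(\<alpha>,\<beta>) = \<Sum>\<^sub>x i(x)(\<alpha>) (i(x)/x)(\<beta>)\<close>. Multiply the cocycle identity (B) by
  \<open>m\<^sup>2\<close> and pair it with \<open>p(\<alpha>) q(\<beta>) r(\<gamma>)\<close> for characters \<open>p, q, r\<close>. By orthogonality of
  characters the quadratic terms \<open>P(\<alpha>,\<beta>) P(\<alpha>\<beta>,\<gamma>)\<close> and \<open>P(\<alpha>,\<beta>\<gamma>) P(\<beta>,\<gamma>)\<close> become \<open>m\<^sup>3\<close> times the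
  number of pairs \<open>(x, y)\<close> of characters solving one of two systems of character equations,
  and the terms involving \<open>\<delta>\<close> contribute nothing; so both systems have equally many solutions.
  With \<open>s = (x \<oplus> y) \<oplus> z\<close> and \<open>p = s/x\<close>, \<open>q = s/y\<close>, \<open>r = s/z\<close>, the first system is solved
  by \<open>(x/y, (x \<oplus> y)/z)\<close>, and every solution \<open>(x', y')\<close> of the second one forces
  \<open>y' = y/z\<close>, \<open>x' = x/(y \<oplus> z)\<close> and hence \<open>s = x \<oplus> (y \<oplus> z)\<close>.\<close>

lemma dual_zero: "\<chi> \<in> dual \<Longrightarrow> \<chi> 0 = 1"
  by (simp add: dual_def)

lemma dual_add: "\<chi> \<in> dual \<Longrightarrow> \<chi> (a + b) = \<chi> a * \<chi> b"
  by (simp add: dual_def)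

lemma dual_minus_mult: "\<chi> \<in> dual \<Longrightarrow> \<chi> (- a) * \<chi> a = 1"
  by (metis dual_add dual_zero left_minus)

lemma dual_nonzero: "\<chi> \<in> dual \<Longrightarrow> \<chi> a \<noteq> 0"
  by (metis dual_minus_mult mult_zero_right zero_neq_one)

lemma dual_minus: "\<chi> \<in> dual \<Longrightarrow> \<chi> (- a) = inverse (\<chi> a)"
  by (metis dual_minus_mult inverse_unique mult.commute)

lemma char_mult_apply: "char_mult x y a = x a * y a"
  by (simp add: char_mult_def)

lemma char_inv_apply: "char_inv x a = inverse (x a)"
  by (simp add: char_inv_def)

lemma char_div_apply: "char_div x y a = x a / y a"
  by (simp add: char_div_def)

lemma oplus_char_apply: "oplus_char i x y a = x a / i (char_div x y) a"
  by (simp add: oplus_char_def char_mult_def char_inv_def divide_inverse)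

lemma dual_mult: "\<chi> \<in> dual \<Longrightarrow> \<psi> \<in> dual \<Longrightarrow> (\<lambda>a. \<chi> a * \<psi> a) \<in> dual"
  by (simp add: dual_def)

lemma char_mult_in_dual: "\<chi> \<in> dual \<Longrightarrow> \<psi> \<in> dual \<Longrightarrow> char_mult \<chi> \<psi> \<in> dual"
  by (simp add: dual_def char_mult_def)

lemma char_inv_in_dual: "\<chi> \<in> dual \<Longrightarrow> char_inv \<chi> \<in> dual"
  by (simp add: dual_def char_inv_def)

lemma char_div_in_dual: "\<chi> \<in> dual \<Longrightarrow> \<psi> \<in> dual \<Longrightarrow> char_div \<chi> \<psi> \<in> dual"
  by (simp add: dual_def char_div_def)

lemma oplus_char_in_dual:
  "\<lbrakk>i ` dual \<subseteq> dual; x \<in> dual; y \<in> dual\<rbrakk> \<Longrightarrow> oplus_char i x y \<in> dual"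
  unfolding oplus_char_def by (blast intro: char_mult_in_dual char_inv_in_dual char_div_in_dual)

lemma dual_value_root_of_unity:
  fixes \<chi> :: "'a::{ab_group_add,finite} \<Rightarrow> complex"
  assumes \<chi>: "\<chi> \<in> dual"
  shows "\<exists>d\<in>{1..CARD('a)}. \<chi> a ^ d = 1"
proof -
  define mult where "mult k = ((+) a ^^ k) 0" for k
  have \<chi>_mult: "\<chi> (mult k) = \<chi> a ^ k" for k
    by (induction k) (simp_all add: mult_def dual_zero[OF \<chi>] dual_add[OF \<chi>])
  have "card (mult ` {0..CARD('a)}) < card {0..CARD('a)}"
    using card_mono[of UNIV "mult ` {0..CARD('a)}"] by simp
  then have "\<not> inj_on mult {0..CARD('a)}"
    by (rule pigeonhole)
  then obtain k l where "k < l" "l \<le> CARD('a)" "mult k = mult l"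
    unfolding inj_on_def by (metis atLeastAtMost_iff linorder_neqE_nat)
  then have "\<chi> a ^ k * \<chi> a ^ (l - k) = \<chi> a ^ k * 1"
    using \<chi>_mult[of k] \<chi>_mult[of l] by (simp flip: power_add)
  then have "\<chi> a ^ (l - k) = 1"
    using dual_nonzero[OF \<chi>] by simp
  then show ?thesis
    using \<open>k < l\<close> \<open>l \<le> CARD('a)\<close> by (intro bexI[of _ "l - k"]) auto
qed

lemma finite_dual: "finite (dual :: ('a::{ab_group_add,finite} \<Rightarrow> complex) set)"
proof -
  define R where "R = (\<Union>d\<in>{1..CARD('a)}. {z::complex. z ^ d = 1})"
  have "finite R"
    unfolding R_def by (auto intro: finite_roots_unity)
  moreover have "(dual :: ('a \<Rightarrow> complex) set) \<subseteq> PiE UNIV (\<lambda>_. R)"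
    using dual_value_root_of_unity unfolding R_def by fastforce
  ultimately show ?thesis
    by (metis finite_PiE finite_subset finite_class.finite_UNIV)
qed

lemma sum_character:
  fixes \<chi> :: "'a::{ab_group_add,finite} \<Rightarrow> complex"
  assumes \<chi>: "\<chi> \<in> dual"
  shows "(\<Sum>a\<in>UNIV. \<chi> a) = (if \<forall>a. \<chi> a = 1 then of_nat CARD('a) else 0)"
proof (cases "\<forall>a. \<chi> a = 1")
  case False
  then obtain b where "\<chi> b \<noteq> 1" by auto
  have "(\<Sum>a\<in>UNIV. \<chi> a) = (\<Sum>a\<in>UNIV. \<chi> (a + b))"
    by (rule sum.reindex_bij_witness[of _ "\<lambda>a. a + b" "\<lambda>a. a - b"]) auto
  also have "\<dots> = \<chi> b * (\<Sum>a\<in>UNIV. \<chi> a)"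
    by (simp add: dual_add[OF \<chi>] sum_distrib_left mult.commute)
  finally have "(\<Sum>a\<in>UNIV. \<chi> a) = 0"
    using \<open>\<chi> b \<noteq> 1\<close> by (metis mult_cancel_right1 mult.commute)
  then show ?thesis using False by simp
qed simp

lemma kdelta_mult: "kdelta a * z = (if a = 0 then z else 0)"
  by (simp add: kdelta_def)

lemma sum_kdelta: "(\<Sum>b\<in>UNIV. kdelta b * f b) = f (0::'a::{ab_group_add,finite})"
  by (simp add: kdelta_mult)

lemma sum_kdelta_add: "(\<Sum>b\<in>UNIV. kdelta (a + b) * f b) = f (- (a::'a::{ab_group_add,finite}))"
  by (simp add: kdelta_mult add_eq_0_iff)

lemma sum_product3_swap:
  "(\<Sum>a\<in>A. \<Sum>b\<in>B. \<Sum>c\<in>C. \<Sum>x\<in>X. \<Sum>y\<in>Y. f x y a * g x y b * h x y c) =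
   (\<Sum>x\<in>X. \<Sum>y\<in>Y. sum (f x y) A * sum (g x y) B * (sum (h x y) C :: 'c::comm_semiring_1))"
proof -
  have "sum F A * sum G B * sum H C = (\<Sum>a\<in>A. \<Sum>b\<in>B. \<Sum>c\<in>C. F a * G b * (H c :: 'c))" for F G H
  proof -
    have "sum F A * sum G B * sum H C = (\<Sum>a\<in>A. F a * sum G B * sum H C)"
      by (simp only: sum_distrib_right)
    also have "\<dots> = (\<Sum>a\<in>A. \<Sum>b\<in>B. \<Sum>c\<in>C. F a * G b * H c)"
      unfolding mult.assoc sum_product by (simp only: sum_distrib_left)
    finally show ?thesis .
  qed
  then show ?thesis
    by (simp only: sum.swap[of _ A X] sum.swap[of _ B X] sum.swap[of _ C X]
        sum.swap[of _ A Y] sum.swap[of _ B Y] sum.swap[of _ C Y])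
qed

lemma sum_sum_if_card:
  assumes "finite X" "finite Y"
  shows "(\<Sum>x\<in>X. \<Sum>y\<in>Y. if P x y then c else 0) =
    of_nat (card {(x, y) \<in> X \<times> Y. P x y}) * (c :: 'c::semiring_1)"
proof -
  have "(\<Sum>x\<in>X. \<Sum>y\<in>Y. if P x y then c else 0) = (\<Sum>z\<in>X \<times> Y. if P (fst z) (snd z) then c else 0)"
    by (simp only: sum.cartesian_product case_prod_unfold)
  also have "\<dots> = (\<Sum>z\<in>{z \<in> X \<times> Y. P (fst z) (snd z)}. c)"
    using assms by (simp only: sum.inter_filter finite_SigmaI)
  also have "{z \<in> X \<times> Y. P (fst z) (snd z)} = {(x, y) \<in> X \<times> Y. P x y}"
    by auto
  finally show ?thesis by simp
qed

section \<open>The cocycle identity for the kernel of \<open>J\<close>\<close>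

definition jacobi_kernel ::
    "(('a::ab_group_add \<Rightarrow> complex) \<Rightarrow> ('a \<Rightarrow> complex)) \<Rightarrow> 'a \<Rightarrow> 'a \<Rightarrow> complex" where
  "jacobi_kernel i a b = (\<Sum>x\<in>dual. i x a * char_mult (i x) (char_inv x) b)"

text \<open>By orthogonality \<open>dual_sum a = m \<delta>(a)\<close>, but that needs enough characters to separate
  the points of \<open>M\<close>; the argument only uses the weaker \<open>sum_dual_sum_characters\<close>.\<close>

definition dual_sum :: "'a::ab_group_add \<Rightarrow> complex" where
  "dual_sum a = (\<Sum>x\<in>dual. x a)"

definition delta_term :: "'a::{ab_group_add,finite} \<Rightarrow> 'a \<Rightarrow> complex" where
  "delta_term a b = kdelta (a + b) * dual_sum a - of_nat CARD('a) * kdelta a * kdelta b"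

lemma jacobi_kernel_antidiagonal:
  assumes "i ` dual \<subseteq> dual" and "a + b = 0"
  shows "jacobi_kernel i a b = dual_sum a"
  unfolding jacobi_kernel_def dual_sum_def
proof (rule sum.cong[OF refl])
  fix x :: "'a \<Rightarrow> complex"
  assume x: "x \<in> dual"
  then have "i x \<in> dual" using assms by blast
  moreover have "b = - a" using \<open>a + b = 0\<close> by (simp add: add_eq_0_iff)
  ultimately show "i x a * char_mult (i x) (char_inv x) b = x a"
    using x by (simp add: char_mult_apply char_inv_apply dual_minus dual_nonzero)
qed

lemma jacobi_kernel_cocycle:
  fixes J :: "'a::{ab_group_add,finite} \<Rightarrow> 'a \<Rightarrow> complex"
  assumes i: "i ` dual \<subseteq> dual"
    and J: "\<forall>a b. J a b = jacobi_kernel i a b / of_nat CARD('a)"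
    and cocycle: "Jstar J a b * Jstar J (a + b) c = Jstar J a (b + c) * Jstar J b c"
  shows "jacobi_kernel i a b * jacobi_kernel i (a + b) c - jacobi_kernel i a (b + c) * jacobi_kernel i b c
    = of_nat CARD('a) * (delta_term a b - delta_term b c)"
proof -
  define m :: complex where "m = of_nat CARD('a)"
  define K where "K a b = jacobi_kernel i a b - m * kdelta a - m * kdelta b" for a b
  have "K a b = m * Jstar J a b" for a b
    unfolding Jstar_def K_def using J by (simp add: m_def field_simps)
  then have "K a b * K (a + b) c = K a (b + c) * K b c"
    using cocycle by (simp add: algebra_simps)
  \<comment> \<open>Expanding, the terms with a single \<open>\<delta>\<close> cancel in pairs since \<open>\<delta>(a) f(a + b) = \<delta>(a) f(b)\<close>;
    the terms \<open>\<delta>(a + b) P(a, b)\<close> are evaluated by the antidiagonal lemma.\<close>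
  then show ?thesis
    unfolding K_def delta_term_def m_def[symmetric]
    by (auto simp: kdelta_def jacobi_kernel_antidiagonal[OF i] algebra_simps split: if_splits)
qed

section \<open>Pairing with characters\<close>

lemma sum_dual_sum_characters:
  fixes p q :: "'a::{ab_group_add,finite} \<Rightarrow> complex"
  assumes p: "p \<in> dual" and q: "q \<in> dual"
  shows "(\<Sum>a\<in>UNIV. dual_sum a * p a * q (- a)) = of_nat CARD('a)"
proof -
  have "(\<Sum>a\<in>UNIV. dual_sum a * p a * q (- a)) = (\<Sum>x\<in>dual. \<Sum>a\<in>UNIV. x a * p a * char_inv q a)"
    unfolding dual_sum_def
    by (simp add: sum_distrib_right char_inv_apply dual_minus[OF q] sum.swap[of _ UNIV])
  also have "\<dots> = (\<Sum>x\<in>dual. if x = char_div q p then of_nat CARD('a) else 0)"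
  proof (rule sum.cong[OF refl])
    fix x :: "'a \<Rightarrow> complex"
    assume x: "x \<in> dual"
    have "(\<forall>a. x a * p a * char_inv q a = 1) \<longleftrightarrow> x = char_div q p"
      using dual_nonzero[OF p] dual_nonzero[OF q]
      by (auto simp: fun_eq_iff char_inv_apply char_div_apply field_simps)
    then show "(\<Sum>a\<in>UNIV. x a * p a * char_inv q a) = (if x = char_div q p then of_nat CARD('a) else 0)"
      using sum_character[OF dual_mult[OF dual_mult[OF x p] char_inv_in_dual[OF q]]] by simp
  qed
  also have "\<dots> = of_nat CARD('a)"
    by (subst sum.delta[OF finite_dual]) (simp add: char_div_in_dual[OF q p])
  finally show ?thesis .
qed

lemma sum_delta_term_characters:
  fixes p q :: "'a::{ab_group_add,finite} \<Rightarrow> complex"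
  assumes p: "p \<in> dual" and q: "q \<in> dual"
  shows "(\<Sum>a\<in>UNIV. \<Sum>b\<in>UNIV. delta_term a b * (p a * q b)) = 0"
proof -
  have "(\<Sum>a\<in>UNIV. \<Sum>b\<in>UNIV. delta_term a b * (p a * q b)) =
      (\<Sum>a\<in>UNIV. \<Sum>b\<in>UNIV. kdelta (a + b) * (dual_sum a * p a * q b))
      - of_nat CARD('a) * (\<Sum>a\<in>UNIV. \<Sum>b\<in>UNIV. kdelta a * (kdelta b * (p a * q b)))"
    by (simp add: delta_term_def sum_subtractf sum_distrib_left algebra_simps)
  also have "\<dots> = of_nat CARD('a) - of_nat CARD('a) * (p 0 * q 0)"
    by (simp only: sum_kdelta_add sum_dual_sum_characters[OF p q] sum_distrib_left[symmetric] sum_kdelta)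
  finally show ?thesis
    by (simp add: dual_zero[OF p] dual_zero[OF q])
qed

definition lhs_solutions ::
    "(('a::ab_group_add \<Rightarrow> complex) \<Rightarrow> ('a \<Rightarrow> complex)) \<Rightarrow> ('a \<Rightarrow> complex) \<Rightarrow> ('a \<Rightarrow> complex) \<Rightarrow>
      ('a \<Rightarrow> complex) \<Rightarrow> (('a \<Rightarrow> complex) \<times> ('a \<Rightarrow> complex)) set" where
  "lhs_solutions i p q r = {(x, y) \<in> dual \<times> dual.
     (\<forall>a. i x a * i y a * p a = 1) \<and>
     (\<forall>a. char_mult (i x) (char_inv x) a * i y a * q a = 1) \<and>
     (\<forall>a. char_mult (i y) (char_inv y) a * r a = 1)}"

definition rhs_solutions ::
    "(('a::ab_group_add \<Rightarrow> complex) \<Rightarrow> ('a \<Rightarrow> complex)) \<Rightarrow> ('a \<Rightarrow> complex) \<Rightarrow> ('a \<Rightarrow> complex) \<Rightarrow>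
      ('a \<Rightarrow> complex) \<Rightarrow> (('a \<Rightarrow> complex) \<times> ('a \<Rightarrow> complex)) set" where
  "rhs_solutions i p q r = {(x, y) \<in> dual \<times> dual.
     (\<forall>a. i x a * p a = 1) \<and>
     (\<forall>a. char_mult (i x) (char_inv x) a * i y a * q a = 1) \<and>
     (\<forall>a. char_mult (i x) (char_inv x) a * char_mult (i y) (char_inv y) a * r a = 1)}"

lemma finite_lhs_solutions: "finite (lhs_solutions i p (q::'a::{ab_group_add,finite} \<Rightarrow> complex) r)"
  by (rule finite_subset[of _ "dual \<times> dual"]) (auto simp: lhs_solutions_def finite_dual)

lemma twisted_in_dual: "\<lbrakk>i ` dual \<subseteq> dual; x \<in> dual\<rbrakk> \<Longrightarrow> char_mult (i x) (char_inv x) \<in> dual"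
  by (blast intro: char_mult_in_dual char_inv_in_dual)

lemma sum_characters_product3:
  fixes f g h :: "('a::{ab_group_add,finite} \<Rightarrow> complex) \<Rightarrow> ('a \<Rightarrow> complex) \<Rightarrow> 'a \<Rightarrow> complex"
  assumes "\<And>x y. \<lbrakk>x \<in> dual; y \<in> dual\<rbrakk> \<Longrightarrow> f x y \<in> dual \<and> g x y \<in> dual \<and> h x y \<in> dual"
  shows "(\<Sum>a\<in>UNIV. \<Sum>b\<in>UNIV. \<Sum>c\<in>UNIV. \<Sum>x\<in>dual. \<Sum>y\<in>dual. f x y a * g x y b * h x y c) =
    of_nat CARD('a) ^ 3 * of_nat (card {(x, y) \<in> dual \<times> dual.
      (\<forall>a. f x y a = 1) \<and> (\<forall>a. g x y a = 1) \<and> (\<forall>a. h x y a = 1)})"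
proof -
  have "(\<Sum>a\<in>UNIV. \<Sum>b\<in>UNIV. \<Sum>c\<in>UNIV. \<Sum>x\<in>dual. \<Sum>y\<in>dual. f x y a * g x y b * h x y c) =
      (\<Sum>x\<in>dual. \<Sum>y\<in>dual. sum (f x y) UNIV * sum (g x y) UNIV * sum (h x y) UNIV)"
    by (rule sum_product3_swap)
  also have "\<dots> = (\<Sum>x\<in>dual. \<Sum>y\<in>dual.
      if (\<forall>a. f x y a = 1) \<and> (\<forall>a. g x y a = 1) \<and> (\<forall>a. h x y a = 1) then of_nat CARD('a) ^ 3 else 0)"
    using assms by (intro sum.cong refl) (simp add: sum_character power3_eq_cube)
  finally show ?thesis
    by (simp add: sum_sum_if_card finite_dual mult.commute)
qed

lemma sum_jacobi_kernel_left_characters: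
  fixes p q r :: "'a::{ab_group_add,finite} \<Rightarrow> complex"
  assumes i: "i ` dual \<subseteq> dual" and p: "p \<in> dual" and q: "q \<in> dual" and r: "r \<in> dual"
  shows "(\<Sum>a\<in>UNIV. \<Sum>b\<in>UNIV. \<Sum>c\<in>UNIV.
      jacobi_kernel i a b * jacobi_kernel i (a + b) c * (p a * q b * r c))
    = of_nat CARD('a) ^ 3 * of_nat (card (lhs_solutions i p q r))"
proof -
  define B where "B x = char_mult (i x) (char_inv x)" for x
  have "jacobi_kernel i a b * jacobi_kernel i (a + b) c * (p a * q b * r c) =
      (\<Sum>x\<in>dual. \<Sum>y\<in>dual. (i x a * i y a * p a) * (B x b * i y b * q b) * (B y c * r c))" for a b c
  proof -
    have "jacobi_kernel i a b * jacobi_kernel i (a + b) c * (p a * q b * r c) =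
        (\<Sum>x\<in>dual. \<Sum>y\<in>dual. i x a * B x b * (i y (a + b) * B y c) * (p a * q b * r c))"
      unfolding jacobi_kernel_def B_def sum_product by (simp only: sum_distrib_right)
    also have "\<dots> = (\<Sum>x\<in>dual. \<Sum>y\<in>dual. (i x a * i y a * p a) * (B x b * i y b * q b) * (B y c * r c))"
      using i by (intro sum.cong refl) (auto simp: dual_add mult_ac)
    finally show ?thesis .
  qed
  then show ?thesis
    unfolding lhs_solutions_def B_def using i p q r
    by (simp only:) (intro sum_characters_product3; auto intro!: dual_mult twisted_in_dual)
qed

lemma sum_jacobi_kernel_right_characters:
  fixes p q r :: "'a::{ab_group_add,finite} \<Rightarrow> complex"
  assumes i: "i ` dual \<subseteq> dual" and p: "p \<in> dual" and q: "q \<in> dual" and r: "r \<in> dual"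
  shows "(\<Sum>a\<in>UNIV. \<Sum>b\<in>UNIV. \<Sum>c\<in>UNIV.
      jacobi_kernel i a (b + c) * jacobi_kernel i b c * (p a * q b * r c))
    = of_nat CARD('a) ^ 3 * of_nat (card (rhs_solutions i p q r))"
proof -
  define B where "B x = char_mult (i x) (char_inv x)" for x
  have "jacobi_kernel i a (b + c) * jacobi_kernel i b c * (p a * q b * r c) =
      (\<Sum>x\<in>dual. \<Sum>y\<in>dual. (i x a * p a) * (B x b * i y b * q b) * (B x c * B y c * r c))" for a b c
  proof -
    have "jacobi_kernel i a (b + c) * jacobi_kernel i b c * (p a * q b * r c) =
        (\<Sum>x\<in>dual. \<Sum>y\<in>dual. i x a * B x (b + c) * (i y b * B y c) * (p a * q b * r c))"
      unfolding jacobi_kernel_def B_def sum_product by (simp only: sum_distrib_right)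
    also have "\<dots> = (\<Sum>x\<in>dual. \<Sum>y\<in>dual. (i x a * p a) * (B x b * i y b * q b) * (B x c * B y c * r c))"
      using i by (intro sum.cong refl) (auto simp: B_def twisted_in_dual dual_add mult_ac)
    finally show ?thesis .
  qed
  then show ?thesis
    unfolding rhs_solutions_def B_def using i p q r
    by (simp only:) (intro sum_characters_product3; auto intro!: dual_mult twisted_in_dual)
qed

lemma card_lhs_solutions_eq_rhs_solutions:
  fixes J :: "'a::{ab_group_add,finite} \<Rightarrow> 'a \<Rightarrow> complex"
  assumes i: "i ` dual \<subseteq> dual"
    and J: "\<forall>a b. J a b = jacobi_kernel i a b / of_nat CARD('a)"
    and cocycle: "\<forall>a b c. Jstar J a b * Jstar J (a + b) c = Jstar J a (b + c) * Jstar J b c"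
    and p: "p \<in> dual" and q: "q \<in> dual" and r: "r \<in> dual"
  shows "card (lhs_solutions i p q r) = card (rhs_solutions i p q r)"
proof -
  define m :: complex where "m = of_nat CARD('a)"
  have left: "(\<Sum>a\<in>UNIV. \<Sum>b\<in>UNIV. \<Sum>c\<in>UNIV. delta_term a b * (p a * q b * r c)) = 0"
  proof -
    have "(\<Sum>a\<in>UNIV. \<Sum>b\<in>UNIV. \<Sum>c\<in>UNIV. delta_term a b * (p a * q b * r c)) =
        (\<Sum>a\<in>UNIV. \<Sum>b\<in>UNIV. delta_term a b * (p a * q b)) * (\<Sum>c\<in>UNIV. r c)"
      by (simp only: sum_distrib_right) (simp only: sum_distrib_left mult.assoc)
    then show ?thesis by (simp add: sum_delta_term_characters[OF p q])
  qed
  have right: "(\<Sum>a\<in>UNIV. \<Sum>b\<in>UNIV. \<Sum>c\<in>UNIV. delta_term b c * (p a * q b * r c)) = 0"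
  proof -
    have "(\<Sum>a\<in>UNIV. \<Sum>b\<in>UNIV. \<Sum>c\<in>UNIV. delta_term b c * (p a * q b * r c)) =
        (\<Sum>a\<in>UNIV. p a) * (\<Sum>b\<in>UNIV. \<Sum>c\<in>UNIV. delta_term b c * (q b * r c))"
      by (simp only: sum_distrib_right) (simp only: sum_distrib_left mult_ac)
    then show ?thesis by (simp add: sum_delta_term_characters[OF q r])
  qed
  have "m ^ 3 * of_nat (card (lhs_solutions i p q r)) - m ^ 3 * of_nat (card (rhs_solutions i p q r)) =
      (\<Sum>a\<in>UNIV. \<Sum>b\<in>UNIV. \<Sum>c\<in>UNIV. (jacobi_kernel i a b * jacobi_kernel i (a + b) c
        - jacobi_kernel i a (b + c) * jacobi_kernel i b c) * (p a * q b * r c))"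
    unfolding m_def sum_jacobi_kernel_left_characters[OF i p q r, symmetric]
      sum_jacobi_kernel_right_characters[OF i p q r, symmetric]
    by (simp only: left_diff_distrib sum_subtractf)
  also have "\<dots> = m * ((\<Sum>a\<in>UNIV. \<Sum>b\<in>UNIV. \<Sum>c\<in>UNIV. delta_term a b * (p a * q b * r c))
      - (\<Sum>a\<in>UNIV. \<Sum>b\<in>UNIV. \<Sum>c\<in>UNIV. delta_term b c * (p a * q b * r c)))"
    by (simp add: jacobi_kernel_cocycle[OF i J cocycle[rule_format]] m_def
        left_diff_distrib right_diff_distrib sum_subtractf sum_distrib_left mult.assoc)
  finally show ?thesis
    unfolding left right m_def by simp
qed

lemma lhs_solution_oplus_char:
  assumes i: "i ` dual \<subseteq> dual" and x: "x \<in> dual" and y: "y \<in> dual" and z: "z \<in> dual"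
  defines "w \<equiv> oplus_char i x y"
  defines "s \<equiv> oplus_char i w z"
  shows "(char_div x y, char_div w z) \<in> lhs_solutions i (char_div s x) (char_div s y) (char_div s z)"
proof -
  have w: "w \<in> dual" unfolding w_def using i x y by (rule oplus_char_in_dual)
  have iX: "i (char_div x y) \<in> dual" and iY: "i (char_div w z) \<in> dual"
    using i x y z w by (auto intro: char_div_in_dual)
  have "x a \<noteq> 0" "y a \<noteq> 0" "z a \<noteq> 0" "i (char_div x y) a \<noteq> 0" "i (char_div w z) a \<noteq> 0" for a
    using x y z iX iY by (simp_all add: dual_nonzero)
  then show ?thesis
    using x y w z unfolding lhs_solutions_def s_def
    by (simp add: char_div_in_dual char_mult_apply char_inv_apply char_div_apply oplus_char_apply
        w_def field_simps)
qed

lemma oplus_char_assoc_of_rhs_solution: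
  assumes i: "i ` dual \<subseteq> dual" and x: "x \<in> dual" and y: "y \<in> dual" and z: "z \<in> dual"
    and s: "s \<in> dual"
    and sol: "(x', y') \<in> rhs_solutions i (char_div s x) (char_div s y) (char_div s z)"
  shows "s = oplus_char i x (oplus_char i y z)"
proof -
  have x': "x' \<in> dual" and y': "y' \<in> dual"
    and eq1: "\<And>a. i x' a * (s a / x a) = 1"
    and eq2: "\<And>a. i x' a / x' a * i y' a * (s a / y a) = 1"
    and eq3: "\<And>a. i x' a / x' a * (i y' a / y' a) * (s a / z a) = 1"
    using sol unfolding rhs_solutions_def
    by (auto simp: char_mult_apply char_inv_apply char_div_apply divide_inverse)
  have nonzero: "x a \<noteq> 0" "y a \<noteq> 0" "z a \<noteq> 0" "s a \<noteq> 0" "x' a \<noteq> 0" "y' a \<noteq> 0"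
      "i x' a \<noteq> 0" "i y' a \<noteq> 0" for a
    using x y z s x' y' i by (auto simp: dual_nonzero)
  have ix': "i x' a = x a / s a" for a
    using eq1[of a] nonzero by (simp add: field_simps)
  have "y' a * z a = y a" for a
    using eq2[of a] eq3[of a] nonzero unfolding ix' by (simp add: field_simps)
  then have "y' = char_div y z"
    using nonzero by (auto simp: char_div_apply field_simps)
  then have "x' = char_div x (oplus_char i y z)"
    using eq2 nonzero unfolding ix' by (auto simp: oplus_char_apply char_div_apply field_simps)
  then show ?thesis
    using nonzero by (auto simp: oplus_char_apply ix' simp flip: \<open>x' = _\<close>)
qed

theorem mainTheorem17:
  fixes J :: "'a::{ab_group_add,finite} \<Rightarrow> 'a \<Rightarrow> complex"
    and i :: "('a \<Rightarrow> complex) \<Rightarrow> ('a \<Rightarrow> complex)"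
  assumes "jacobi_function J"
    and "bij_betw i dual dual"
    and "\<forall>x\<in>dual. i x = char_mult x (i (char_inv x))"
    and "\<forall>a b. J a b = (1 / of_nat (card (UNIV :: 'a set))) *
            (\<Sum>x\<in>dual. i x a * char_mult (i x) (char_inv x) b)"
  shows "\<forall>x\<in>dual. \<forall>y\<in>dual. \<forall>z\<in>dual.
           oplus_char i (oplus_char i x y) z = oplus_char i x (oplus_char i y z)"
proof (intro ballI)
  fix x y z :: "'a \<Rightarrow> complex"
  assume x: "x \<in> dual" and y: "y \<in> dual" and z: "z \<in> dual"
  have i: "i ` dual \<subseteq> dual"
    using assms(2) by (simp add: bij_betw_def)
  have J: "\<forall>a b. J a b = jacobi_kernel i a b / of_nat CARD('a)"
    using assms(4) by (simp add: jacobi_kernel_def)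
  have cocycle: "\<forall>a b c. Jstar J a b * Jstar J (a + b) c = Jstar J a (b + c) * Jstar J b c"
    using assms(1) by (simp add: jacobi_function_def)
  define s where "s = oplus_char i (oplus_char i x y) z"
  have s: "s \<in> dual"
    unfolding s_def using i x y z by (blast intro: oplus_char_in_dual)
  let ?p = "char_div s x" and ?q = "char_div s y" and ?r = "char_div s z"
  have "lhs_solutions i ?p ?q ?r \<noteq> {}"
    using lhs_solution_oplus_char[OF i x y z] unfolding s_def by blast
  then have "card (lhs_solutions i ?p ?q ?r) \<noteq> 0"
    by (simp add: finite_lhs_solutions)
  moreover have "card (lhs_solutions i ?p ?q ?r) = card (rhs_solutions i ?p ?q ?r)"
    using s x y z by (intro card_lhs_solutions_eq_rhs_solutions[OF i J cocycle] char_div_in_dual)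
  ultimately have "rhs_solutions i ?p ?q ?r \<noteq> {}"
    by auto
  then obtain x' y' where "(x', y') \<in> rhs_solutions i ?p ?q ?r"
    by auto
  then show "oplus_char i (oplus_char i x y) z = oplus_char i x (oplus_char i y z)"
    using oplus_char_assoc_of_rhs_solution[OF i x y z s] unfolding s_def by blast
qed

end
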